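(* With $S^\pm$ as defined in the context and $P_k$ the projectors of the Veronese sequence, for $0\le k\le 2s-1$ one has $\operatorname{tr}(S^+P_kS^-)\ne0$ and $P_{k+1}=\frac{S^+P_kS^-}{\operatorname{tr}(S^+P_kS^-)}$, and for $1\le k\le 2s$ one has $\operatorname{tr}(S^-P_kS^+)\neq 0$ and $P_{k-1}=\frac{S^-P_kS^+}{\operatorname{tr}(S^-P_kS^+)}$.
   Context: Let $2s\in\mathbb{Z}_{>0}$, $\xi_\pm=\xi^1\pm i\xi^2$ with $\xi_-=\overline{\xi_+}$, $\partial=\frac12(\partial_{\xi^1}-i\partial_{\xi^2})$. Matrix indices run over $0,\dots,2s$. Spin-$s$ matrices: $(\sigma^z)_{ij}=(s-i)\delta_{ij}$, $(\sigma^+)_{ij}=\sqrt{(2s-j+1)j}\,\delta_{i,j-1}$, $(\sigma^-)_{ij}=\sqrt{(2s-i+1)i}\,\delta_{i-1,j}$; $S^+=\frac{1}{1+\xi_+\xi_-}(2\xi_-\sigma^z-\sigma^-+\xi_-^2\sigma^+)$, $S^-=\frac{1}{1+\xi_+\xi_-}(2\xi_+\sigma^z+\xi_+^2\sigma^--\sigma^+)$. Veronese sequence: $(f_0)_j=\sqrt{\binom{2s}{j}}\xi_+^j$, $f_{k+1}=\big(\mathbf 1_{2s+1}-\frac{f_kf_k^\dagger}{f_k^\dagger f_k}\big)\partial f_k$; $P_k=\frac{f_kf_k^\dagger}{f_k^\dagger f_k}$. *)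

theory Defs
  imports "HOL-Analysis.Analysis" "Jordan_Normal_Form.Matrix"
begin

text \<open>Spin-s objects with n = 2s a positive natural number; matrix indices 0..n.\<close>

definition sigma_z :: "nat \<Rightarrow> complex mat" where
  "sigma_z n = mat (n+1) (n+1) (\<lambda>(i,j). if i = j then of_real (real n / 2 - real i) else 0)"

definition sigma_plus :: "nat \<Rightarrow> complex mat" where
  "sigma_plus n = mat (n+1) (n+1)
     (\<lambda>(i,j). if i + 1 = j then of_real (sqrt (real ((n - j + 1) * j))) else 0)"

definition sigma_minus :: "nat \<Rightarrow> complex mat" where
  "sigma_minus n = mat (n+1) (n+1)
     (\<lambda>(i,j). if i = j + 1 then of_real (sqrt (real ((n - i + 1) * i))) else 0)"

text \<open>S^+ and S^- at the point xi_+ = z (so xi_- = cnj z).\<close>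
definition S_plus :: "nat \<Rightarrow> complex \<Rightarrow> complex mat" where
  "S_plus n z = (1 / (1 + z * cnj z)) \<cdot>\<^sub>m
     ((2 * cnj z) \<cdot>\<^sub>m sigma_z n - sigma_minus n + (cnj z ^ 2) \<cdot>\<^sub>m sigma_plus n)"

definition S_minus :: "nat \<Rightarrow> complex \<Rightarrow> complex mat" where
  "S_minus n z = (1 / (1 + z * cnj z)) \<cdot>\<^sub>m
     ((2 * z) \<cdot>\<^sub>m sigma_z n + (z ^ 2) \<cdot>\<^sub>m sigma_minus n - sigma_plus n)"

definition wirtinger :: "(complex \<Rightarrow> complex) \<Rightarrow> complex \<Rightarrow> complex" where
  "wirtinger g z =
     (vector_derivative (\<lambda>t::real. g (z + of_real t)) (at 0)
      - \<i> * vector_derivative (\<lambda>t::real. g (z + \<i> * of_real t)) (at 0)) / 2"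

definition wirtinger_vec :: "nat \<Rightarrow> (complex \<Rightarrow> complex vec) \<Rightarrow> complex \<Rightarrow> complex vec" where
  "wirtinger_vec m F z = vec m (\<lambda>j. wirtinger (\<lambda>w. F w $ j) z)"

definition vnorm2 :: "complex vec \<Rightarrow> complex" where
  "vnorm2 v = (\<Sum>i<dim_vec v. cnj (v $ i) * v $ i)"

definition proj :: "complex vec \<Rightarrow> complex mat" where
  "proj v = (1 / vnorm2 v) \<cdot>\<^sub>m mat (dim_vec v) (dim_vec v) (\<lambda>(i,j). v $ i * cnj (v $ j))"

primrec veronese :: "nat \<Rightarrow> nat \<Rightarrow> complex \<Rightarrow> complex vec" where
  "veronese n 0 = (\<lambda>z. vec (n+1) (\<lambda>j. of_real (sqrt (real (n choose j))) * z ^ j))"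
| "veronese n (Suc k) = (\<lambda>z. (1\<^sub>m (n+1) - proj (veronese n k z))
                               *\<^sub>v wirtinger_vec (n+1) (veronese n k) z)"

definition mtrace :: "complex mat \<Rightarrow> complex" where
  "mtrace A = (\<Sum>i<dim_row A. A $$ (i,i))"

definition P :: "nat \<Rightarrow> nat \<Rightarrow> complex \<Rightarrow> complex mat" where
  "P n k z = proj (veronese n k z)"

end

theory Submission
  imports Defs
begin

text \<open>Write \<open>q = 1 + z cnj z\<close>. On coefficient sequences, \<open>T = q S\<^sup>+\<close> and \<open>R = q S\<^sup>-\<close>, together
  with a weight operator \<open>H\<close>, satisfy the \<open>sl\<^sub>2\<close> relations \<open>[R, T] = 2 q H\<close> and \<open>[H, T] = - q T\<close>.
  The zeroth Veronese vector \<open>g\<^sub>0\<close> is killed by \<open>R\<close> and is an \<open>H\<close>-eigenvector, so the vectors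
  \<open>g\<^sub>k = T\<^sup>k g\<^sub>0\<close> are \<open>H\<close>-eigenvectors with \<open>R g\<^sub>k\<^sub>+\<^sub>1 = \<mu>\<^sub>k g\<^sub>k\<close> and \<open>\<mu>\<^sub>k \<noteq> 0\<close> for \<open>k < 2s\<close>.
  As \<open>R\<close> is the adjoint of \<open>T\<close>, consecutive \<open>g\<^sub>k\<close> are orthogonal and \<open>g\<^sub>0, \<dots>, g\<^sub>2\<^sub>s\<close> are
  nonzero. The Wirtinger derivative \<open>\<partial>g\<^sub>k\<close> is a combination of \<open>g\<^sub>k\<close> and \<open>g\<^sub>k\<^sub>+\<^sub>1\<close>, so the
  Gram--Schmidt recursion gives \<open>f\<^sub>k = (-q\<^sup>-\<^sup>2)\<^sup>k g\<^sub>k\<close>. Hence \<open>S\<^sup>+ f\<^sub>k \<parallel> f\<^sub>k\<^sub>+\<^sub>1\<close> and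
  \<open>S\<^sup>- f\<^sub>k\<^sub>+\<^sub>1 \<parallel> f\<^sub>k\<close>; since \<open>S\<^sup>- = (S\<^sup>+)\<^sup>\<dagger>\<close>, conjugating \<open>P\<^sub>k\<close> by \<open>S\<^sup>\<plusminus>\<close> yields a multiple of
  the neighbouring projector, and the multiple is the trace.\<close>

section \<open>Wirtinger calculus\<close>

definition has_wirtinger_derivative :: "(complex \<Rightarrow> complex) \<Rightarrow> (complex \<Rightarrow> complex) \<Rightarrow> bool" where
  "has_wirtinger_derivative f f' \<longleftrightarrow>
     (\<exists>f''. \<forall>z. (f has_derivative (\<lambda>d. f' z * d + f'' z * cnj d)) (at z))"

lemma wirtinger_eq:
  assumes "has_wirtinger_derivative f f'"
  shows "wirtinger f z = f' z"
proof -
  obtain f'' where f: "\<And>w. (f has_derivative (\<lambda>d. f' w * d + f'' w * cnj d)) (at w)"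
    using assms unfolding has_wirtinger_derivative_def by blast
  have along: "((\<lambda>t::real. f (z + c * of_real t)) has_vector_derivative (f' z * c + f'' z * cnj c)) (at 0)"
    for c :: complex
  proof -
    have "((\<lambda>t::real. z + c * of_real t) has_derivative (\<lambda>t. c * of_real t)) (at 0)"
      by (auto intro!: derivative_eq_intros bounded_linear.has_derivative[OF bounded_linear_of_real])
    from has_derivative_compose[OF this f[of "z + c * of_real 0"]] show ?thesis
      unfolding has_vector_derivative_def by (simp add: algebra_simps scaleR_conv_of_real)
  qed
  show ?thesis
    unfolding wirtinger_def vector_derivative_at[OF along[of 1, simplified]]
      vector_derivative_at[OF along[of \<i>]]
    by (simp add: algebra_simps)
qed

lemma has_wirtinger_derivative_cong:
  "has_wirtinger_derivative f f' \<Longrightarrow> (\<And>z. f z = g z) \<Longrightarrow> (\<And>z. f' z = g' z) \<Longrightarrow>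
    has_wirtinger_derivative g g'"
  by (metis ext)

lemma has_wirtinger_derivative_const: "has_wirtinger_derivative (\<lambda>z. c) (\<lambda>z. 0)"
  unfolding has_wirtinger_derivative_def
  by (rule exI[of _ "\<lambda>z. 0"]) (auto intro!: derivative_eq_intros)

lemma has_wirtinger_derivative_ident: "has_wirtinger_derivative (\<lambda>z. z) (\<lambda>z. 1)"
  unfolding has_wirtinger_derivative_def
  by (rule exI[of _ "\<lambda>z. 0"]) (auto intro!: derivative_eq_intros)

lemma has_wirtinger_derivative_cnj: "has_wirtinger_derivative (\<lambda>z. cnj z) (\<lambda>z. 0)"
  unfolding has_wirtinger_derivative_def
  by (rule exI[of _ "\<lambda>z. 1"]) (auto intro!: derivative_eq_intros)

lemma has_wirtinger_derivative_add:
  assumes "has_wirtinger_derivative f f'" "has_wirtinger_derivative g g'"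
  shows "has_wirtinger_derivative (\<lambda>z. f z + g z) (\<lambda>z. f' z + g' z)"
proof -
  obtain f'' g'' where "\<And>z. (f has_derivative (\<lambda>d. f' z * d + f'' z * cnj d)) (at z)"
    "\<And>z. (g has_derivative (\<lambda>d. g' z * d + g'' z * cnj d)) (at z)"
    using assms unfolding has_wirtinger_derivative_def by metis
  then show ?thesis
    unfolding has_wirtinger_derivative_def
    by (intro exI[of _ "\<lambda>z. f'' z + g'' z"]) (auto intro!: derivative_eq_intros simp: algebra_simps)
qed

lemma has_wirtinger_derivative_mult:
  assumes "has_wirtinger_derivative f f'" "has_wirtinger_derivative g g'"
  shows "has_wirtinger_derivative (\<lambda>z. f z * g z) (\<lambda>z. f z * g' z + f' z * g z)"
proof -
  obtain f'' g'' where "\<And>z. (f has_derivative (\<lambda>d. f' z * d + f'' z * cnj d)) (at z)"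
    "\<And>z. (g has_derivative (\<lambda>d. g' z * d + g'' z * cnj d)) (at z)"
    using assms unfolding has_wirtinger_derivative_def by metis
  then show ?thesis
    unfolding has_wirtinger_derivative_def
    by (intro exI[of _ "\<lambda>z. f z * g'' z + f'' z * g z"])
      (auto intro!: derivative_eq_intros simp: algebra_simps)
qed

lemma has_wirtinger_derivative_inverse:
  assumes "has_wirtinger_derivative f f'" "\<And>z. f z \<noteq> 0"
  shows "has_wirtinger_derivative (\<lambda>z. inverse (f z)) (\<lambda>z. - f' z / f z ^ 2)"
proof -
  obtain f'' where f: "\<And>z. (f has_derivative (\<lambda>d. f' z * d + f'' z * cnj d)) (at z)"
    using assms unfolding has_wirtinger_derivative_def by metis
  have "((\<lambda>z. inverse (f z)) has_derivative (\<lambda>d. - f' z / f z ^ 2 * d + - f'' z / f z ^ 2 * cnj d)) (at z)"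
    for z
    by (rule has_derivative_eq_rhs[OF Deriv.has_derivative_inverse[OF assms(2) f]])
      (use assms(2)[of z] in \<open>auto simp: field_simps power2_eq_square\<close>)
  then show ?thesis
    unfolding has_wirtinger_derivative_def by (intro exI[of _ "\<lambda>z. - f'' z / f z ^ 2"]) blast
qed

lemma has_wirtinger_derivative_scale:
  assumes "has_wirtinger_derivative f f'"
  shows "has_wirtinger_derivative (\<lambda>z. c * f z) (\<lambda>z. c * f' z)"
  using has_wirtinger_derivative_mult[OF has_wirtinger_derivative_const[of c] assms]
  by (rule has_wirtinger_derivative_cong) simp_all

lemma has_wirtinger_derivative_cnj_mult:
  assumes "has_wirtinger_derivative f f'"
  shows "has_wirtinger_derivative (\<lambda>z. cnj z * f z) (\<lambda>z. cnj z * f' z)"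
  using has_wirtinger_derivative_mult[OF has_wirtinger_derivative_cnj assms]
  by (rule has_wirtinger_derivative_cong) simp_all

lemma has_wirtinger_derivative_power:
  assumes "has_wirtinger_derivative f f'"
  shows "has_wirtinger_derivative (\<lambda>z. f z ^ k) (\<lambda>z. of_nat k * f z ^ (k - 1) * f' z)"
proof (induction k)
  case 0
  show ?case using has_wirtinger_derivative_const[of 1] by simp
next
  case (Suc k)
  show ?case
    using has_wirtinger_derivative_mult[OF assms Suc]
    by (rule has_wirtinger_derivative_cong) (simp, cases k, simp_all add: algebra_simps)
qed

section \<open>Spin operators on coefficient sequences\<close>

text \<open>A vector of \<open>\<complex>\<^sup>n\<^sup>+\<^sup>1\<close> is represented by its coefficient sequence; \<open>ladder_up n i\<close> and
  \<open>ladder_down n i\<close> are the entries of \<open>\<sigma>\<^sup>+\<close> at \<open>(i, i + 1)\<close> and of \<open>\<sigma>\<^sup>-\<close> at \<open>(i, i - 1)\<close>.\<close>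

definition ladder_up :: "nat \<Rightarrow> nat \<Rightarrow> complex" where
  "ladder_up n i = of_real (sqrt (real ((n - i) * (i + 1))))"

definition ladder_down :: "nat \<Rightarrow> nat \<Rightarrow> complex" where
  "ladder_down n i = of_real (sqrt (real ((n + 1 - i) * i)))"

lemma ladder_down_Suc [simp]: "ladder_down n (Suc i) = ladder_up n i"
  by (simp add: ladder_up_def ladder_down_def mult.commute)

lemma ladder_down_0 [simp]: "ladder_down n 0 = 0"
  by (simp add: ladder_down_def)

lemma ladder_up_self [simp]: "ladder_up n n = 0"
  by (simp add: ladder_up_def)

lemma cnj_ladder_up [simp]: "cnj (ladder_up n i) = ladder_up n i"
  by (simp add: ladder_up_def)

lemma cnj_ladder_down [simp]: "cnj (ladder_down n i) = ladder_down n i"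
  by (simp add: ladder_down_def)

lemma ladder_up_above: "n < i \<Longrightarrow> ladder_up n i = 0"
  by (simp add: ladder_up_def)

lemma ladder_up_squared:
  assumes "i \<le> n"
  shows "ladder_up n i * ladder_up n i = (of_nat n - of_nat i) * (of_nat i + 1)"
proof -
  have "ladder_up n i * ladder_up n i = of_nat ((n - i) * (i + 1))"
    unfolding ladder_up_def by (simp flip: of_real_mult) (simp add: of_real_mult)
  also have "\<dots> = (of_nat n - of_nat i) * (of_nat i + 1)"
    by (simp only: of_nat_mult of_nat_diff[OF assms] of_nat_add of_nat_1)
  finally show ?thesis .
qed

definition spin_z :: "nat \<Rightarrow> (nat \<Rightarrow> complex) \<Rightarrow> nat \<Rightarrow> complex" where
  "spin_z n v = (\<lambda>i. (of_nat n / 2 - of_nat i) * v i)"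

definition spin_plus :: "nat \<Rightarrow> (nat \<Rightarrow> complex) \<Rightarrow> nat \<Rightarrow> complex" where
  "spin_plus n v = (\<lambda>i. ladder_up n i * v (Suc i))"

definition spin_minus :: "nat \<Rightarrow> (nat \<Rightarrow> complex) \<Rightarrow> nat \<Rightarrow> complex" where
  "spin_minus n v = (\<lambda>i. ladder_down n i * v (i - 1))"

definition vanishes_above :: "nat \<Rightarrow> (nat \<Rightarrow> complex) \<Rightarrow> bool" where
  "vanishes_above n v \<longleftrightarrow> (\<forall>i>n. v i = 0)"

lemma spin_linear:
  "spin_z n (\<lambda>i. u i + v i) = (\<lambda>i. spin_z n u i + spin_z n v i)"
  "spin_z n (\<lambda>i. u i - v i) = (\<lambda>i. spin_z n u i - spin_z n v i)"
  "spin_z n (\<lambda>i. c * v i) = (\<lambda>i. c * spin_z n v i)"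
  "spin_plus n (\<lambda>i. u i + v i) = (\<lambda>i. spin_plus n u i + spin_plus n v i)"
  "spin_plus n (\<lambda>i. u i - v i) = (\<lambda>i. spin_plus n u i - spin_plus n v i)"
  "spin_plus n (\<lambda>i. c * v i) = (\<lambda>i. c * spin_plus n v i)"
  "spin_minus n (\<lambda>i. u i + v i) = (\<lambda>i. spin_minus n u i + spin_minus n v i)"
  "spin_minus n (\<lambda>i. u i - v i) = (\<lambda>i. spin_minus n u i - spin_minus n v i)"
  "spin_minus n (\<lambda>i. c * v i) = (\<lambda>i. c * spin_minus n v i)"
  by (simp_all add: spin_z_def spin_plus_def spin_minus_def fun_eq_iff field_simps)

lemma spin_plus_spin_z: "spin_plus n (spin_z n v) = (\<lambda>i. spin_z n (spin_plus n v) i - spin_plus n v i)"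
  by (simp add: spin_z_def spin_plus_def fun_eq_iff algebra_simps)

lemma spin_minus_spin_z: "spin_minus n (spin_z n v) = (\<lambda>i. spin_z n (spin_minus n v) i + spin_minus n v i)"
proof
  fix i
  show "spin_minus n (spin_z n v) i = spin_z n (spin_minus n v) i + spin_minus n v i"
    by (cases i) (simp_all add: spin_z_def spin_minus_def algebra_simps)
qed

lemma spin_minus_spin_plus:
  assumes "vanishes_above n v"
  shows "spin_minus n (spin_plus n v) = (\<lambda>i. spin_plus n (spin_minus n v) i - 2 * spin_z n v i)"
proof
  fix i
  show "spin_minus n (spin_plus n v) i = spin_plus n (spin_minus n v) i - 2 * spin_z n v i"
  proof (cases "i \<le> n")
    case True
    show ?thesis
    proof (cases i)
      case (Suc j)
      have "j \<le> n" using True Suc by simp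
      have down_up: "spin_minus n (spin_plus n v) i = (of_nat n - of_nat j) * (of_nat j + 1) * v i"
        using ladder_up_squared[OF \<open>j \<le> n\<close>]
        by (simp add: Suc spin_minus_def spin_plus_def flip: mult.assoc)
      have up_down: "spin_plus n (spin_minus n v) i = (of_nat n - of_nat i) * (of_nat i + 1) * v i"
        using ladder_up_squared[OF True] by (simp add: spin_minus_def spin_plus_def flip: mult.assoc)
      show ?thesis
        unfolding down_up up_down by (simp add: Suc spin_z_def algebra_simps)
    qed (simp add: spin_z_def spin_plus_def spin_minus_def ladder_up_squared algebra_simps)
  next
    case False
    then show ?thesis
      using assms by (cases i) (auto simp: spin_z_def spin_plus_def spin_minus_def vanishes_above_def ladder_up_above)
  qed
qed

lemmas spin_commutators = spin_plus_spin_z spin_minus_spin_z spin_minus_spin_plus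

text \<open>Up to the factor \<open>1 + z * cnj z\<close>, \<open>raise_op n (cnj z)\<close> and \<open>lower_op n z\<close> are \<open>S\<^sup>+\<close> and
  \<open>S\<^sup>-\<close> at \<open>\<xi>\<^sub>+ = z\<close>; together with \<open>weight_op\<close> they span a copy of \<open>sl\<^sub>2\<close>.\<close>

definition raise_op :: "nat \<Rightarrow> complex \<Rightarrow> (nat \<Rightarrow> complex) \<Rightarrow> nat \<Rightarrow> complex" where
  "raise_op n w v = (\<lambda>i. 2 * w * spin_z n v i - spin_minus n v i + w\<^sup>2 * spin_plus n v i)"

definition lower_op :: "nat \<Rightarrow> complex \<Rightarrow> (nat \<Rightarrow> complex) \<Rightarrow> nat \<Rightarrow> complex" where
  "lower_op n z v = (\<lambda>i. 2 * z * spin_z n v i + z\<^sup>2 * spin_minus n v i - spin_plus n v i)"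

definition weight_op :: "nat \<Rightarrow> complex \<Rightarrow> complex \<Rightarrow> (nat \<Rightarrow> complex) \<Rightarrow> nat \<Rightarrow> complex" where
  "weight_op n z w v = (\<lambda>i. z * spin_minus n v i + w * spin_plus n v i + (1 - z * w) * spin_z n v i)"

lemma raise_op_lincomb:
  "raise_op n w (\<lambda>i. a * u i + b * v i) = (\<lambda>i. a * raise_op n w u i + b * raise_op n w v i)"
  by (simp add: raise_op_def spin_linear algebra_simps)

lemma raise_op_scale: "raise_op n w (\<lambda>i. c * v i) = (\<lambda>i. c * raise_op n w v i)"
  by (simp add: raise_op_def spin_linear algebra_simps)

lemma raise_op_zero: "raise_op n w (\<lambda>i. 0) = (\<lambda>i. 0)"
  using raise_op_scale[of n w 0] by simp

lemma vanishes_above_raise_op: "vanishes_above n v \<Longrightarrow> vanishes_above n (raise_op n w v)"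
  by (auto simp: vanishes_above_def raise_op_def spin_z_def spin_plus_def spin_minus_def
      ladder_up_above ladder_down_def elim!: less_SucE)

lemma lower_raise_commutator:
  assumes "vanishes_above n v"
  shows "lower_op n z (raise_op n w v) =
    (\<lambda>i. raise_op n w (lower_op n z v) i + 2 * (1 + z * w) * weight_op n z w v i)"
  by (simp add: lower_op_def raise_op_def weight_op_def spin_linear spin_commutators assms)
    (simp add: fun_eq_iff algebra_simps power2_eq_square)

lemma weight_raise_commutator:
  assumes "vanishes_above n v"
  shows "weight_op n z w (raise_op n w v) =
    (\<lambda>i. raise_op n w (weight_op n z w v) i - (1 + z * w) * raise_op n w v i)"
  by (simp add: raise_op_def weight_op_def spin_linear spin_commutators assms)
    (simp add: fun_eq_iff algebra_simps power2_eq_square)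

section \<open>The raising sequence of the zeroth Veronese vector\<close>

lemma one_plus_mult_cnj_nonzero: "1 + z * cnj z \<noteq> 0"
proof
  assume "1 + z * cnj z = 0"
  then have "Re (1 + z * cnj z) = 0" by simp
  moreover have "Re (1 + z * cnj z) = 1 + (Re z)\<^sup>2 + (Im z)\<^sup>2"
    by (simp add: complex_mult_cnj)
  ultimately show False
    by (smt (verit) zero_le_power2)
qed

definition binom_sqrt :: "nat \<Rightarrow> nat \<Rightarrow> complex" where
  "binom_sqrt n i = of_real (sqrt (real (n choose i)))"

lemma Suc_times_binomial_Suc: "Suc i * (n choose Suc i) = (n - i) * (n choose i)"
  using binomial_absorb_comp[of n i] binomial_absorption[of i n] by simp

lemma ladder_up_binom_sqrt:
  "ladder_up n i * binom_sqrt n (Suc i) = (of_nat n - of_nat i) * binom_sqrt n i"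
proof (cases "i \<le> n")
  case True
  have "real ((n - i) * (i + 1)) * real (n choose Suc i) = real (n - i) * real (n - i) * real (n choose i)"
    using Suc_times_binomial_Suc[of i n] by (metis Suc_eq_plus1 mult.assoc mult.commute of_nat_mult)
  then have "sqrt (real ((n - i) * (i + 1))) * sqrt (real (n choose Suc i)) = real (n - i) * sqrt (real (n choose i))"
    unfolding real_sqrt_mult[symmetric] by (simp add: real_sqrt_mult)
  then show ?thesis
    using True unfolding ladder_up_def binom_sqrt_def by (metis of_nat_diff of_real_mult of_real_of_nat_eq)
qed (simp add: ladder_up_def binom_sqrt_def)

lemma ladder_down_binom_sqrt: "ladder_down n i * binom_sqrt n (i - 1) = of_nat i * binom_sqrt n i"
proof (cases i)
  case (Suc j)
  have "real ((n - j) * (j + 1)) * real (n choose j) = real (Suc j) * real (Suc j) * real (n choose Suc j)"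
    using Suc_times_binomial_Suc[of j n] by (metis Suc_eq_plus1 mult.assoc mult.commute of_nat_mult)
  then have "sqrt (real ((n - j) * (j + 1))) * sqrt (real (n choose j)) = real (Suc j) * sqrt (real (n choose Suc j))"
    unfolding real_sqrt_mult[symmetric] by (simp add: real_sqrt_mult)
  then show ?thesis
    unfolding Suc ladder_down_Suc ladder_up_def binom_sqrt_def by (metis diff_Suc_1 of_real_mult of_real_of_nat_eq)
qed simp

definition veronese_seq0 :: "nat \<Rightarrow> complex \<Rightarrow> nat \<Rightarrow> complex" where
  "veronese_seq0 n z = (\<lambda>i. binom_sqrt n i * z ^ i)"

definition veronese_seq :: "nat \<Rightarrow> nat \<Rightarrow> complex \<Rightarrow> nat \<Rightarrow> complex" where
  "veronese_seq n k z = (raise_op n (cnj z) ^^ k) (veronese_seq0 n z)"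

lemma veronese_seq_0: "veronese_seq n 0 z = veronese_seq0 n z"
  by (simp add: veronese_seq_def)

lemma veronese_seq_Suc: "veronese_seq n (Suc k) z = raise_op n (cnj z) (veronese_seq n k z)"
  by (simp add: veronese_seq_def)

lemma vanishes_above_veronese_seq: "vanishes_above n (veronese_seq n k z)"
proof (induction k)
  case 0
  show ?case by (simp add: veronese_seq_0 vanishes_above_def veronese_seq0_def binom_sqrt_def)
qed (simp add: veronese_seq_Suc vanishes_above_raise_op)

lemma spin_minus_veronese_seq0:
  "spin_minus n (veronese_seq0 n z) i = of_nat i * binom_sqrt n i * z ^ (i - 1)"
  using ladder_down_binom_sqrt[of n i] by (simp add: spin_minus_def veronese_seq0_def flip: mult.assoc)

lemma z_mult_spin_minus_veronese_seq0:
  "z * spin_minus n (veronese_seq0 n z) i = of_nat i * veronese_seq0 n z i"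
  unfolding spin_minus_veronese_seq0 by (cases i) (simp_all add: veronese_seq0_def)

lemma spin_plus_veronese_seq0:
  "spin_plus n (veronese_seq0 n z) i = (of_nat n - of_nat i) * z * veronese_seq0 n z i"
proof -
  have "spin_plus n (veronese_seq0 n z) i = ladder_up n i * binom_sqrt n (Suc i) * z ^ Suc i"
    by (simp add: spin_plus_def veronese_seq0_def mult.assoc)
  then show ?thesis
    unfolding ladder_up_binom_sqrt by (simp add: veronese_seq0_def algebra_simps)
qed

lemma lower_op_veronese_seq0: "lower_op n z (veronese_seq0 n z) = (\<lambda>i. 0)"
proof
  fix i
  have "z\<^sup>2 * spin_minus n (veronese_seq0 n z) i = z * of_nat i * veronese_seq0 n z i"
    using z_mult_spin_minus_veronese_seq0[of z n i] by (simp add: power2_eq_square)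
  then show "lower_op n z (veronese_seq0 n z) i = 0"
    by (simp add: lower_op_def spin_z_def spin_plus_veronese_seq0 algebra_simps)
qed

lemma weight_op_veronese_seq0:
  "weight_op n z w (veronese_seq0 n z) = (\<lambda>i. (1 + z * w) * (of_nat n / 2) * veronese_seq0 n z i)"
  by (simp add: weight_op_def fun_eq_iff z_mult_spin_minus_veronese_seq0 spin_plus_veronese_seq0
      spin_z_def algebra_simps)
    (simp add: field_simps)

lemma spin_minus_veronese_seq0_eq:
  "(1 + z * w)\<^sup>2 * spin_minus n (veronese_seq0 n z) i =
    (1 + z * w) * of_nat n * w * veronese_seq0 n z i - raise_op n w (veronese_seq0 n z) i"
proof -
  have "z * w * (2 + z * w) * spin_minus n (veronese_seq0 n z) i = w * (2 + z * w) * of_nat i * veronese_seq0 n z i"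
    using z_mult_spin_minus_veronese_seq0[of z n i] by (metis mult.assoc mult.left_commute)
  then show ?thesis
    by (simp add: raise_op_def spin_z_def spin_plus_veronese_seq0 power2_eq_square algebra_simps)
qed

lemma weight_op_veronese_seq:
  "weight_op n z (cnj z) (veronese_seq n k z) =
    (\<lambda>i. (1 + z * cnj z) * (of_nat n / 2 - of_nat k) * veronese_seq n k z i)"
proof (induction k)
  case 0
  show ?case by (simp add: veronese_seq_0 weight_op_veronese_seq0)
next
  case (Suc k)
  show ?case
    unfolding veronese_seq_Suc weight_raise_commutator[OF vanishes_above_veronese_seq] Suc
      raise_op_scale
    by (simp add: algebra_simps)
qed

definition lowering_coeff :: "nat \<Rightarrow> nat \<Rightarrow> complex \<Rightarrow> complex" where
  "lowering_coeff n k z = (1 + z * cnj z)\<^sup>2 * of_nat (Suc k) * (of_nat n - of_nat k)"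

lemma lowering_coeff_nonzero: "k < n \<Longrightarrow> lowering_coeff n k z \<noteq> 0"
  using one_plus_mult_cnj_nonzero[of z] by (simp add: lowering_coeff_def del: of_nat_Suc)

lemma lowering_coeff_Suc:
  "lowering_coeff n (Suc k) z = lowering_coeff n k z + 2 * (1 + z * cnj z)\<^sup>2 * (of_nat n / 2 - of_nat (Suc k))"
  by (simp add: lowering_coeff_def field_simps)

lemma lower_op_veronese_seq:
  "lower_op n z (veronese_seq n (Suc k) z) = (\<lambda>i. lowering_coeff n k z * veronese_seq n k z i)"
proof (induction k)
  case 0
  show ?case
    unfolding veronese_seq_Suc veronese_seq_0
      lower_raise_commutator[OF vanishes_above_veronese_seq[of n 0, unfolded veronese_seq_0]]
      lower_op_veronese_seq0 raise_op_zero weight_op_veronese_seq0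
    by (simp add: lowering_coeff_def power2_eq_square fun_eq_iff field_simps)
next
  case (Suc k)
  show ?case
    unfolding veronese_seq_Suc[of n "Suc k"] lower_raise_commutator[OF vanishes_above_veronese_seq]
      Suc raise_op_scale weight_op_veronese_seq veronese_seq_Suc[of n k, symmetric]
    by (simp add: lowering_coeff_Suc fun_eq_iff power2_eq_square algebra_simps)
qed

definition seq_inner :: "nat \<Rightarrow> (nat \<Rightarrow> complex) \<Rightarrow> (nat \<Rightarrow> complex) \<Rightarrow> complex" where
  "seq_inner n u v = (\<Sum>i<Suc n. cnj (u i) * v i)"

lemma seq_inner_scale_left: "seq_inner n (\<lambda>i. c * u i) v = cnj c * seq_inner n u v"
  by (simp add: seq_inner_def sum_distrib_left ac_simps del: sum.lessThan_Suc)

lemma seq_inner_spin_plus: "seq_inner n u (spin_plus n v) = seq_inner n (spin_minus n u) v"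
proof -
  have "seq_inner n u (spin_plus n v) = (\<Sum>i<n. cnj (u i) * (ladder_up n i * v (Suc i)))"
    by (simp add: seq_inner_def spin_plus_def)
  also have "\<dots> = seq_inner n (spin_minus n u) v"
    by (simp add: seq_inner_def spin_minus_def sum.lessThan_Suc_shift ac_simps del: sum.lessThan_Suc)
  finally show ?thesis .
qed

lemma seq_inner_spin_minus: "seq_inner n u (spin_minus n v) = seq_inner n (spin_plus n u) v"
proof -
  have "seq_inner n u (spin_minus n v) = (\<Sum>i<n. cnj (u (Suc i)) * (ladder_up n i * v i))"
    by (simp add: seq_inner_def spin_minus_def sum.lessThan_Suc_shift del: sum.lessThan_Suc)
  also have "\<dots> = seq_inner n (spin_plus n u) v"
    by (simp add: seq_inner_def spin_plus_def ac_simps)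
  finally show ?thesis .
qed

lemma seq_inner_raise_op: "seq_inner n u (raise_op n (cnj z) v) = seq_inner n (lower_op n z u) v"
proof -
  have "seq_inner n u (raise_op n (cnj z) v) =
      2 * cnj z * seq_inner n (spin_z n u) v - seq_inner n u (spin_minus n v) + (cnj z)\<^sup>2 * seq_inner n u (spin_plus n v)"
    by (simp add: seq_inner_def raise_op_def spin_z_def algebra_simps sum_distrib_left sum.distrib sum_subtractf)
  also have "\<dots> = seq_inner n (lower_op n z u) v"
    unfolding seq_inner_spin_plus seq_inner_spin_minus
    by (simp add: seq_inner_def lower_op_def algebra_simps sum_distrib_left sum.distrib sum_subtractf)
  finally show ?thesis .
qed

lemma veronese_seq_orthogonal: "seq_inner n (veronese_seq n k z) (veronese_seq n (Suc k) z) = 0"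
proof (induction k)
  case 0
  show ?case
    unfolding veronese_seq_Suc seq_inner_raise_op veronese_seq_0 lower_op_veronese_seq0
    by (simp add: seq_inner_def)
next
  case (Suc k)
  show ?case
    unfolding veronese_seq_Suc[of n "Suc k"] seq_inner_raise_op lower_op_veronese_seq
      seq_inner_scale_left Suc
    by simp
qed

lemma veronese_seq_norm_Suc:
  "seq_inner n (veronese_seq n (Suc k) z) (veronese_seq n (Suc k) z) =
    cnj (lowering_coeff n k z) * seq_inner n (veronese_seq n k z) (veronese_seq n k z)"
  by (subst (2) veronese_seq_Suc)
    (simp only: seq_inner_raise_op lower_op_veronese_seq seq_inner_scale_left)

lemma seq_inner_self_nonzero:
  assumes "u 0 \<noteq> 0"
  shows "seq_inner n u u \<noteq> 0"
proof -
  have "Re (seq_inner n u u) = (\<Sum>i<Suc n. (Re (u i))\<^sup>2 + (Im (u i))\<^sup>2)"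
    by (simp add: seq_inner_def Re_sum power2_eq_square del: sum.lessThan_Suc)
  also have "\<dots> \<ge> (Re (u 0))\<^sup>2 + (Im (u 0))\<^sup>2"
    unfolding sum.lessThan_Suc_shift by (simp add: sum_nonneg)
  finally show ?thesis
    using assms complex_neq_0 by force
qed

lemma veronese_seq_norm_nonzero:
  "k \<le> n \<Longrightarrow> seq_inner n (veronese_seq n k z) (veronese_seq n k z) \<noteq> 0"
proof (induction k)
  case 0
  show ?case
    by (rule seq_inner_self_nonzero) (simp add: veronese_seq_0 veronese_seq0_def binom_sqrt_def)
next
  case (Suc k)
  then show ?case
    using lowering_coeff_nonzero[of k n z] by (simp add: veronese_seq_norm_Suc)
qed

section \<open>Wirtinger derivative of the raising sequence\<close>

text \<open>Since \<open>\<partial> cnj z = 0\<close>, the derivative \<open>\<partial>\<close> commutes with \<open>raise_op n (cnj z)\<close>.\<close>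
lemma has_wirtinger_derivative_raise_op:
  assumes "\<And>i. has_wirtinger_derivative (\<lambda>z. u z i) (\<lambda>z. u' z i)"
  shows "has_wirtinger_derivative (\<lambda>z. raise_op n (cnj z) (u z) i) (\<lambda>z. raise_op n (cnj z) (u' z) i)"
proof -
  have "has_wirtinger_derivative
      (\<lambda>z. cnj z * (a * u z i) + (b * u z (i - 1) + cnj z * (cnj z * (c * u z (Suc i)))))
      (\<lambda>z. cnj z * (a * u' z i) + (b * u' z (i - 1) + cnj z * (cnj z * (c * u' z (Suc i)))))"
    for a b c
    by (intro has_wirtinger_derivative_add has_wirtinger_derivative_cnj_mult
        has_wirtinger_derivative_scale assms)
  from this[of "2 * (of_nat n / 2 - of_nat i)" "- ladder_down n i" "ladder_up n i"] show ?thesis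
    by (rule has_wirtinger_derivative_cong)
      (simp_all add: raise_op_def spin_z_def spin_minus_def spin_plus_def power2_eq_square algebra_simps)
qed

definition veronese_scale :: "complex \<Rightarrow> complex" where
  "veronese_scale z = - 1 / (1 + z * cnj z)\<^sup>2"

lemma veronese_scale_nonzero: "veronese_scale z \<noteq> 0"
  using one_plus_mult_cnj_nonzero[of z] by (simp add: veronese_scale_def)

lemma has_wirtinger_derivative_veronese_scale:
  "has_wirtinger_derivative veronese_scale (\<lambda>z. 2 * cnj z / (1 + z * cnj z) ^ 3)"
proof -
  have "has_wirtinger_derivative (\<lambda>z. 1 + z * cnj z) (\<lambda>z. 0 + (z * 0 + 1 * cnj z))"
    by (intro has_wirtinger_derivative_add has_wirtinger_derivative_mult
        has_wirtinger_derivative_const has_wirtinger_derivative_ident has_wirtinger_derivative_cnj)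
  then have "has_wirtinger_derivative (\<lambda>z. inverse (1 + z * cnj z)) (\<lambda>z. - cnj z / (1 + z * cnj z)\<^sup>2)"
    using has_wirtinger_derivative_inverse one_plus_mult_cnj_nonzero by force
  from has_wirtinger_derivative_scale[OF has_wirtinger_derivative_power[OF this, of 2], of "- 1"]
  show ?thesis
    by (rule has_wirtinger_derivative_cong)
      (use one_plus_mult_cnj_nonzero in \<open>simp_all add: veronese_scale_def field_simps power2_eq_square power3_eq_cube\<close>)
qed

lemma has_wirtinger_derivative_veronese_seq0:
  "has_wirtinger_derivative (\<lambda>z. veronese_seq0 n z i) (\<lambda>z. spin_minus n (veronese_seq0 n z) i)"
  using has_wirtinger_derivative_scale[OF has_wirtinger_derivative_power[OF has_wirtinger_derivative_ident]]
  by (rule has_wirtinger_derivative_cong)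
    (simp add: veronese_seq0_def, simp add: spin_minus_veronese_seq0 algebra_simps)

lemma spin_minus_veronese_seq0_decomp:
  "spin_minus n (veronese_seq0 n z) i =
    of_nat n * cnj z / (1 + z * cnj z) * veronese_seq0 n z i + veronese_scale z * veronese_seq n 1 z i"
proof -
  define q where "q = 1 + z * cnj z"
  have "q \<noteq> 0"
    unfolding q_def by (rule one_plus_mult_cnj_nonzero)
  have "q\<^sup>2 * spin_minus n (veronese_seq0 n z) i =
      q * of_nat n * cnj z * veronese_seq0 n z i - veronese_seq n 1 z i"
    unfolding q_def spin_minus_veronese_seq0_eq by (simp add: veronese_seq_Suc veronese_seq_0)
  with \<open>q \<noteq> 0\<close> show ?thesis
    unfolding q_def[symmetric] veronese_scale_def by (simp add: field_simps power2_eq_square)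
qed

lemma has_wirtinger_derivative_veronese_seq:
  "has_wirtinger_derivative (\<lambda>z. veronese_seq n k z i)
     (\<lambda>z. of_nat n * cnj z / (1 + z * cnj z) * veronese_seq n k z i +
          veronese_scale z * veronese_seq n (Suc k) z i)"
proof (induction k arbitrary: i)
  case 0
  show ?case
    using has_wirtinger_derivative_veronese_seq0
    by (rule has_wirtinger_derivative_cong) (simp_all add: veronese_seq_0 spin_minus_veronese_seq0_decomp)
next
  case (Suc k)
  show ?case
    using has_wirtinger_derivative_raise_op[OF Suc.IH]
    by (rule has_wirtinger_derivative_cong) (simp_all only: veronese_seq_Suc raise_op_lincomb)
qed

section \<open>Projectors\<close>

lemma index_mult_mat_vec_sum:
  "i < dim_row A \<Longrightarrow> dim_col A = dim_vec v \<Longrightarrow> (A *\<^sub>v v) $ i = (\<Sum>j<dim_vec v. A $$ (i, j) * v $ j)"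
  by (simp add: scalar_prod_def atLeast0LessThan)

lemma index_mult_mat_sum:
  "i < dim_row A \<Longrightarrow> j < dim_col B \<Longrightarrow> dim_col A = dim_row B \<Longrightarrow>
    (A * B) $$ (i, j) = (\<Sum>l<dim_row B. A $$ (i, l) * B $$ (l, j))"
  by (simp add: scalar_prod_def atLeast0LessThan)

lemma dim_proj [simp]: "dim_row (proj v) = dim_vec v" "dim_col (proj v) = dim_vec v"
  by (simp_all add: proj_def)

lemma vnorm2_smult: "vnorm2 (c \<cdot>\<^sub>v u) = c * cnj c * vnorm2 u"
  by (simp add: vnorm2_def sum_distrib_left ac_simps)

lemma proj_smult: "c \<noteq> 0 \<Longrightarrow> proj (c \<cdot>\<^sub>v u) = proj u"
  unfolding proj_def vnorm2_smult by (rule eq_matI) (auto simp: field_simps)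

lemma mtrace_proj: "vnorm2 v \<noteq> 0 \<Longrightarrow> mtrace (proj v) = 1"
  by (simp add: mtrace_def proj_def vnorm2_def sum_divide_distrib[symmetric] ac_simps)

lemma one_minus_proj_mult_vec_lincomb:
  fixes u v :: "complex vec"
  assumes u: "dim_vec u = m" and v: "dim_vec v = m" and "vnorm2 u \<noteq> 0"
    and orth: "(\<Sum>j<m. cnj (u $ j) * v $ j) = 0"
  shows "(1\<^sub>m m - proj u) *\<^sub>v (a \<cdot>\<^sub>v u + b \<cdot>\<^sub>v v) = b \<cdot>\<^sub>v v"
proof (rule eq_vecI)
  fix i
  assume "i < dim_vec (b \<cdot>\<^sub>v v)"
  then have i: "i < m" using v by simp
  have comp: "(\<Sum>j<m. cnj (u $ j) * (a * u $ j + b * v $ j)) = a * vnorm2 u"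
    using orth by (simp add: vnorm2_def u distrib_left sum.distrib sum_distrib_left[symmetric] ac_simps)
  have "((1\<^sub>m m - proj u) *\<^sub>v (a \<cdot>\<^sub>v u + b \<cdot>\<^sub>v v)) $ i =
      (\<Sum>j<m. (if i = j then a * u $ j + b * v $ j else 0) -
        u $ i / vnorm2 u * (cnj (u $ j) * (a * u $ j + b * v $ j)))"
    using i u v
    by (subst index_mult_mat_vec_sum) (auto simp: proj_def algebra_simps add_divide_distrib intro!: sum.cong)
  also have "\<dots> = a * u $ i + b * v $ i -
      (\<Sum>j<m. u $ i / vnorm2 u * (cnj (u $ j) * (a * u $ j + b * v $ j)))"
    using i by (simp add: sum_subtractf)
  also have "\<dots> = a * u $ i + b * v $ i - u $ i / vnorm2 u * (a * vnorm2 u)"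
    by (simp only: comp flip: sum_distrib_left)
  finally show "((1\<^sub>m m - proj u) *\<^sub>v (a \<cdot>\<^sub>v u + b \<cdot>\<^sub>v v)) $ i = (b \<cdot>\<^sub>v v) $ i"
    using i v \<open>vnorm2 u \<noteq> 0\<close> by simp
qed (use u v in simp)

lemma mult_proj_mult_adjoint:
  fixes A B :: "complex mat" and u v :: "complex vec"
  assumes A: "A \<in> carrier_mat m m" and B: "B \<in> carrier_mat m m"
    and adj: "\<And>i j. i < m \<Longrightarrow> j < m \<Longrightarrow> B $$ (i, j) = cnj (A $$ (j, i))"
    and u: "dim_vec u = m" and v: "dim_vec v = m" and Au: "A *\<^sub>v u = c \<cdot>\<^sub>v v"
    and "vnorm2 v \<noteq> 0"
  shows "A * proj u * B = (c * cnj c * vnorm2 v / vnorm2 u) \<cdot>\<^sub>m proj v"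
proof (rule eq_matI)
  fix i j
  assume "i < dim_row ((c * cnj c * vnorm2 v / vnorm2 u) \<cdot>\<^sub>m proj v)"
    "j < dim_col ((c * cnj c * vnorm2 v / vnorm2 u) \<cdot>\<^sub>m proj v)"
  then have i: "i < m" and j: "j < m" using v by auto
  have Au_index: "(\<Sum>l<m. A $$ (k, l) * u $ l) = c * v $ k" if "k < m" for k
  proof -
    have "(\<Sum>l<m. A $$ (k, l) * u $ l) = (A *\<^sub>v u) $ k"
      using that A u by (subst index_mult_mat_vec_sum) auto
    also have "\<dots> = c * v $ k"
      using Au that v by simp
    finally show ?thesis .
  qed
  have AP: "(A * proj u) $$ (i, l) = c * v $ i * cnj (u $ l) / vnorm2 u" if "l < m" for l
  proof -
    have "(A * proj u) $$ (i, l) = (\<Sum>k<m. A $$ (i, k) * u $ k) * cnj (u $ l) / vnorm2 u"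
      using A u i that
      by (subst index_mult_mat_sum) (auto simp: proj_def sum_distrib_right sum_divide_distrib intro!: sum.cong)
    then show ?thesis using Au_index[OF i] by simp
  qed
  have "(A * proj u * B) $$ (i, j) = (\<Sum>l<m. c * v $ i / vnorm2 u * cnj (A $$ (j, l) * u $ l))"
    using A B u i j
    by (subst index_mult_mat_sum) (auto simp: AP adj simp del: index_mult_mat(1) intro!: sum.cong)
  also have "\<dots> = c * v $ i / vnorm2 u * cnj (\<Sum>l<m. A $$ (j, l) * u $ l)"
    by (simp only: cnj_sum sum_distrib_left)
  also have "\<dots> = c * cnj c * v $ i * cnj (v $ j) / vnorm2 u"
    by (simp add: Au_index[OF j])
  finally show "(A * proj u * B) $$ (i, j) = ((c * cnj c * vnorm2 v / vnorm2 u) \<cdot>\<^sub>m proj v) $$ (i, j)"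
    using i j v \<open>vnorm2 v \<noteq> 0\<close> by (simp add: proj_def)
qed (use A B v in auto)

lemma proj_eq_smult_normalized:
  fixes M :: "complex mat"
  assumes "M = t \<cdot>\<^sub>m proj v" "t \<noteq> 0" "vnorm2 v \<noteq> 0"
  shows "mtrace M \<noteq> 0 \<and> proj v = (1 / mtrace M) \<cdot>\<^sub>m M"
proof -
  have "mtrace M = t * mtrace (proj v)"
    unfolding assms(1) mtrace_def by (auto simp: sum_distrib_left intro!: sum.cong)
  then have "mtrace M = t"
    using mtrace_proj[OF assms(3)] by simp
  with assms show ?thesis
    by (auto intro!: eq_matI)
qed

lemma conjugated_proj_normalized:
  fixes A B :: "complex mat" and u v :: "complex vec"
  assumes "A \<in> carrier_mat m m" "B \<in> carrier_mat m m"
    and "\<And>i j. i < m \<Longrightarrow> j < m \<Longrightarrow> B $$ (i, j) = cnj (A $$ (j, i))"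
    and "dim_vec u = m" "dim_vec v = m" "A *\<^sub>v u = c \<cdot>\<^sub>v v"
    and "c \<noteq> 0" "vnorm2 u \<noteq> 0" "vnorm2 v \<noteq> 0"
  shows "mtrace (A * proj u * B) \<noteq> 0 \<and> proj v = (1 / mtrace (A * proj u * B)) \<cdot>\<^sub>m (A * proj u * B)"
  using assms
  by (intro proj_eq_smult_normalized[where t = "c * cnj c * vnorm2 v / vnorm2 u"] mult_proj_mult_adjoint) auto

section \<open>The Veronese sequence\<close>

definition veronese_vec :: "nat \<Rightarrow> nat \<Rightarrow> complex \<Rightarrow> complex vec" where
  "veronese_vec n k z = vec (Suc n) (veronese_seq n k z)"

lemma dim_veronese_vec [simp]: "dim_vec (veronese_vec n k z) = Suc n"
  by (simp add: veronese_vec_def)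

lemma vnorm2_veronese_vec_nonzero: "k \<le> n \<Longrightarrow> vnorm2 (veronese_vec n k z) \<noteq> 0"
  using veronese_seq_norm_nonzero by (simp add: vnorm2_def seq_inner_def veronese_vec_def)

lemma wirtinger_vec_smult_veronese_vec:
  assumes "has_wirtinger_derivative c c'"
  shows "wirtinger_vec (Suc n) (\<lambda>w. c w \<cdot>\<^sub>v veronese_vec n k w) z =
    (c z * (of_nat n * cnj z / (1 + z * cnj z)) + c' z) \<cdot>\<^sub>v veronese_vec n k z +
    (c z * veronese_scale z) \<cdot>\<^sub>v veronese_vec n (Suc k) z"
proof (rule eq_vecI)
  fix j
  assume "j < dim_vec ((c z * (of_nat n * cnj z / (1 + z * cnj z)) + c' z) \<cdot>\<^sub>v veronese_vec n k z +
    (c z * veronese_scale z) \<cdot>\<^sub>v veronese_vec n (Suc k) z)"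
  then have j: "j < Suc n" by simp
  have "wirtinger_vec (Suc n) (\<lambda>w. c w \<cdot>\<^sub>v veronese_vec n k w) z $ j =
      wirtinger (\<lambda>w. c w * veronese_seq n k w j) z"
    using j by (simp add: wirtinger_vec_def veronese_vec_def)
  also have "\<dots> = c z * (of_nat n * cnj z / (1 + z * cnj z) * veronese_seq n k z j +
      veronese_scale z * veronese_seq n (Suc k) z j) + c' z * veronese_seq n k z j"
    by (rule wirtinger_eq[OF has_wirtinger_derivative_mult[OF assms has_wirtinger_derivative_veronese_seq]])
  finally show "wirtinger_vec (Suc n) (\<lambda>w. c w \<cdot>\<^sub>v veronese_vec n k w) z $ j =
    ((c z * (of_nat n * cnj z / (1 + z * cnj z)) + c' z) \<cdot>\<^sub>v veronese_vec n k z +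
    (c z * veronese_scale z) \<cdot>\<^sub>v veronese_vec n (Suc k) z) $ j"
    using j by (simp add: veronese_vec_def algebra_simps)
qed (simp add: wirtinger_vec_def)

theorem veronese_eq_smult_veronese_vec:
  "k \<le> n \<Longrightarrow> veronese n k z = veronese_scale z ^ k \<cdot>\<^sub>v veronese_vec n k z"
proof (induction k arbitrary: z)
  case 0
  show ?case by (simp add: veronese_vec_def veronese_seq_0 veronese_seq0_def binom_sqrt_def)
next
  case (Suc k)
  then have "k \<le> n" by simp
  with Suc.IH have IH: "veronese n k = (\<lambda>w. veronese_scale w ^ k \<cdot>\<^sub>v veronese_vec n k w)"
    by blast
  obtain d where
    "wirtinger_vec (Suc n) (veronese n k) z =
      d \<cdot>\<^sub>v veronese_vec n k z + veronese_scale z ^ Suc k \<cdot>\<^sub>v veronese_vec n (Suc k) z"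
    unfolding IH wirtinger_vec_smult_veronese_vec[OF has_wirtinger_derivative_power[OF
        has_wirtinger_derivative_veronese_scale]]
    by (simp add: mult.commute)
  moreover have "(\<Sum>j<Suc n. cnj (veronese_vec n k z $ j) * veronese_vec n (Suc k) z $ j) = 0"
    using veronese_seq_orthogonal by (simp add: veronese_vec_def seq_inner_def)
  ultimately show ?case
    using one_minus_proj_mult_vec_lincomb[OF _ _ vnorm2_veronese_vec_nonzero[OF \<open>k \<le> n\<close>]]
    by (simp add: IH proj_smult veronese_scale_nonzero)
qed

section \<open>Conjugating the Veronese projectors by \<open>S\<^sup>\<plusminus>\<close>\<close>

lemma dim_sigma [simp]:
  "dim_row (sigma_z n) = Suc n" "dim_col (sigma_z n) = Suc n"
  "dim_row (sigma_plus n) = Suc n" "dim_col (sigma_plus n) = Suc n"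
  "dim_row (sigma_minus n) = Suc n" "dim_col (sigma_minus n) = Suc n"
  by (simp_all add: sigma_z_def sigma_plus_def sigma_minus_def)

lemma dim_S_plus_S_minus [simp]:
  "dim_row (S_plus n z) = Suc n" "dim_col (S_plus n z) = Suc n"
  "dim_row (S_minus n z) = Suc n" "dim_col (S_minus n z) = Suc n"
  by (simp_all add: S_plus_def S_minus_def)

lemma carrier_S_plus_S_minus:
  "S_plus n z \<in> carrier_mat (Suc n) (Suc n)" "S_minus n z \<in> carrier_mat (Suc n) (Suc n)"
  by (simp_all add: carrier_matI)

lemma index_S_plus:
  "i < Suc n \<Longrightarrow> j < Suc n \<Longrightarrow> S_plus n z $$ (i, j) = 1 / (1 + z * cnj z) *
    (2 * cnj z * sigma_z n $$ (i, j) - sigma_minus n $$ (i, j) + (cnj z)\<^sup>2 * sigma_plus n $$ (i, j))"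
  unfolding S_plus_def by simp

lemma index_S_minus:
  "i < Suc n \<Longrightarrow> j < Suc n \<Longrightarrow> S_minus n z $$ (i, j) = 1 / (1 + z * cnj z) *
    (2 * z * sigma_z n $$ (i, j) + z\<^sup>2 * sigma_minus n $$ (i, j) - sigma_plus n $$ (i, j))"
  unfolding S_minus_def by simp

lemma S_minus_adjoint:
  assumes "i < Suc n" "j < Suc n"
  shows "S_minus n z $$ (i, j) = cnj (S_plus n z $$ (j, i))"
proof -
  have "cnj (1 / (1 + z * cnj z)) = 1 / (1 + z * cnj z)"
    by (simp add: mult.commute)
  with assms show ?thesis
    by (simp only: index_S_plus index_S_minus complex_cnj_mult complex_cnj_diff complex_cnj_add)
      (simp add: sigma_z_def sigma_plus_def sigma_minus_def)
qed

lemma S_plus_adjoint: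
  "i < Suc n \<Longrightarrow> j < Suc n \<Longrightarrow> S_plus n z $$ (i, j) = cnj (S_minus n z $$ (j, i))"
  by (simp add: S_minus_adjoint)

lemma sigma_z_row_sum: "i < Suc n \<Longrightarrow> (\<Sum>j<Suc n. sigma_z n $$ (i, j) * v j) = spin_z n v i"
proof -
  assume i: "i < Suc n"
  have "(\<Sum>j<Suc n. sigma_z n $$ (i, j) * v j) =
      (\<Sum>j<Suc n. if j = i then (of_nat n / 2 - of_nat i) * v j else 0)"
    using i by (intro sum.cong) (auto simp: sigma_z_def of_real_diff of_real_divide)
  also have "\<dots> = spin_z n v i"
    using i by (simp add: spin_z_def)
  finally show ?thesis .
qed

lemma sigma_plus_row_sum: "i < Suc n \<Longrightarrow> (\<Sum>j<Suc n. sigma_plus n $$ (i, j) * v j) = spin_plus n v i"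
proof -
  assume i: "i < Suc n"
  have "(\<Sum>j<Suc n. sigma_plus n $$ (i, j) * v j) =
      (\<Sum>j<Suc n. if j = Suc i then ladder_up n i * v j else 0)"
    using i by (intro sum.cong) (auto simp: sigma_plus_def ladder_up_def Suc_diff_Suc mult.commute)
  also have "\<dots> = spin_plus n v i"
    using i by (cases "i = n") (auto simp: spin_plus_def)
  finally show ?thesis .
qed

lemma sigma_minus_row_sum: "i < Suc n \<Longrightarrow> (\<Sum>j<Suc n. sigma_minus n $$ (i, j) * v j) = spin_minus n v i"
proof -
  assume i: "i < Suc n"
  have "(\<Sum>j<Suc n. sigma_minus n $$ (i, j) * v j) =
      (\<Sum>j<Suc n. if j = i - 1 \<and> 0 < i then ladder_down n i * v j else 0)"
    using i by (intro sum.cong) (auto simp: sigma_minus_def ladder_down_def Suc_diff_le)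
  also have "\<dots> = spin_minus n v i"
    using i by (cases i) (auto simp: spin_minus_def)
  finally show ?thesis .
qed

lemma S_plus_mult_vec:
  "S_plus n z *\<^sub>v vec (Suc n) v = (1 / (1 + z * cnj z)) \<cdot>\<^sub>v vec (Suc n) (raise_op n (cnj z) v)"
proof (rule eq_vecI)
  fix i
  assume "i < dim_vec ((1 / (1 + z * cnj z)) \<cdot>\<^sub>v vec (Suc n) (raise_op n (cnj z) v))"
  then have i: "i < Suc n" by simp
  have "(S_plus n z *\<^sub>v vec (Suc n) v) $ i = (\<Sum>j<Suc n. S_plus n z $$ (i, j) * v j)"
    using i by (subst index_mult_mat_vec_sum) (auto intro!: sum.cong)
  also have "\<dots> = 1 / (1 + z * cnj z) * (2 * cnj z * (\<Sum>j<Suc n. sigma_z n $$ (i, j) * v j)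
      - (\<Sum>j<Suc n. sigma_minus n $$ (i, j) * v j) + (cnj z)\<^sup>2 * (\<Sum>j<Suc n. sigma_plus n $$ (i, j) * v j))"
    using i by (simp add: index_S_plus sum_distrib_left sum.distrib sum_subtractf algebra_simps
        del: sum.lessThan_Suc)
  finally show "(S_plus n z *\<^sub>v vec (Suc n) v) $ i =
      ((1 / (1 + z * cnj z)) \<cdot>\<^sub>v vec (Suc n) (raise_op n (cnj z) v)) $ i"
    using i by (simp add: sigma_z_row_sum sigma_plus_row_sum sigma_minus_row_sum raise_op_def
        del: sum.lessThan_Suc)
qed simp

lemma S_minus_mult_vec:
  "S_minus n z *\<^sub>v vec (Suc n) v = (1 / (1 + z * cnj z)) \<cdot>\<^sub>v vec (Suc n) (lower_op n z v)"
proof (rule eq_vecI)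
  fix i
  assume "i < dim_vec ((1 / (1 + z * cnj z)) \<cdot>\<^sub>v vec (Suc n) (lower_op n z v))"
  then have i: "i < Suc n" by simp
  have "(S_minus n z *\<^sub>v vec (Suc n) v) $ i = (\<Sum>j<Suc n. S_minus n z $$ (i, j) * v j)"
    using i by (subst index_mult_mat_vec_sum) (auto intro!: sum.cong)
  also have "\<dots> = 1 / (1 + z * cnj z) * (2 * z * (\<Sum>j<Suc n. sigma_z n $$ (i, j) * v j)
      + z\<^sup>2 * (\<Sum>j<Suc n. sigma_minus n $$ (i, j) * v j) - (\<Sum>j<Suc n. sigma_plus n $$ (i, j) * v j))"
    using i by (simp add: index_S_minus sum_distrib_left sum.distrib sum_subtractf algebra_simps
        del: sum.lessThan_Suc)
  finally show "(S_minus n z *\<^sub>v vec (Suc n) v) $ i =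
      ((1 / (1 + z * cnj z)) \<cdot>\<^sub>v vec (Suc n) (lower_op n z v)) $ i"
    using i by (simp add: sigma_z_row_sum sigma_plus_row_sum sigma_minus_row_sum lower_op_def
        del: sum.lessThan_Suc)
qed simp

lemma S_plus_mult_veronese_vec:
  "S_plus n z *\<^sub>v veronese_vec n k z = (1 / (1 + z * cnj z)) \<cdot>\<^sub>v veronese_vec n (Suc k) z"
  unfolding veronese_vec_def S_plus_mult_vec veronese_seq_Suc ..

lemma S_minus_mult_veronese_vec:
  "S_minus n z *\<^sub>v veronese_vec n (Suc k) z =
    (lowering_coeff n k z / (1 + z * cnj z)) \<cdot>\<^sub>v veronese_vec n k z"
  unfolding veronese_vec_def S_minus_mult_vec lower_op_veronese_seq by (rule eq_vecI) auto

lemma P_eq_proj_veronese_vec: "k \<le> n \<Longrightarrow> P n k z = proj (veronese_vec n k z)"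
  by (simp add: P_def veronese_eq_smult_veronese_vec proj_smult veronese_scale_nonzero)

lemma raising_projector:
  assumes "k < n"
  shows "mtrace (S_plus n z * P n k z * S_minus n z) \<noteq> 0 \<and>
    P n (Suc k) z = (1 / mtrace (S_plus n z * P n k z * S_minus n z)) \<cdot>\<^sub>m (S_plus n z * P n k z * S_minus n z)"
  using assms one_plus_mult_cnj_nonzero[of z]
  by (simp add: P_eq_proj_veronese_vec)
    (intro conjugated_proj_normalized[OF carrier_S_plus_S_minus S_minus_adjoint _ _ S_plus_mult_veronese_vec];
      simp add: vnorm2_veronese_vec_nonzero)

lemma lowering_projector:
  assumes "1 \<le> k" "k \<le> n"
  shows "mtrace (S_minus n z * P n k z * S_plus n z) \<noteq> 0 \<and>
    P n (k - 1) z = (1 / mtrace (S_minus n z * P n k z * S_plus n z)) \<cdot>\<^sub>m (S_minus n z * P n k z * S_plus n z)"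
proof -
  obtain j where k: "k = Suc j" and "j < n"
    using assms by (cases k) auto
  then show ?thesis
    using one_plus_mult_cnj_nonzero[of z] lowering_coeff_nonzero[OF \<open>j < n\<close>, of z]
    by (simp add: P_eq_proj_veronese_vec)
      (intro conjugated_proj_normalized[OF carrier_S_plus_S_minus(2,1) S_plus_adjoint _ _ S_minus_mult_veronese_vec];
        simp add: vnorm2_veronese_vec_nonzero)
qed

theorem mainTheorem9:
  fixes n :: nat and z :: complex
  assumes "0 < n"
  shows "(\<forall>k<n.
            mtrace (S_plus n z * P n k z * S_minus n z) \<noteq> 0 \<and>
            P n (Suc k) z = (1 / mtrace (S_plus n z * P n k z * S_minus n z))
                              \<cdot>\<^sub>m (S_plus n z * P n k z * S_minus n z))
       \<and> (\<forall>k. 1 \<le> k \<and> k \<le> n \<longrightarrow>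
            mtrace (S_minus n z * P n k z * S_plus n z) \<noteq> 0 \<and>
            P n (k - 1) z = (1 / mtrace (S_minus n z * P n k z * S_plus n z))
                              \<cdot>\<^sub>m (S_minus n z * P n k z * S_plus n z))"
  using raising_projector lowering_projector by blast

end
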